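(* Let $(\lambda_m)_{m\in\mathbb{N}_0}$ be real numbers, $\gamma>0$, $f\in C^\infty[x_0,x_0+\gamma]$ complex-valued, and $0<2\delta<\gamma$. Then for every $m\in\mathbb{N}_0$ and all $x\in[x_0,x_0+\delta]$, $$|D^{(2m+1)}f(x)|\le 2\max\left\{\tfrac2\delta,\delta\right\}e^{(|\lambda_{2m}|+|\lambda_{2m+1}|)\delta}\left(\max_{t\in[x_0,x_0+2\delta]}|D^{(2m)}f(t)|+\max_{t\in[x_0,x_0+2\delta]}|D^{(2m+2)}f(t)|\right).$$
   Context: $D^{(n)}f=(\frac{d}{dt}-\lambda_0)\cdots(\frac{d}{dt}-\lambda_{n-1})f$ with $D^{(0)}f=f$ (one-sided derivatives at endpoints). *)

theory Defs
  imports "HOL-Analysis.Analysis"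
begin

definition smooth_on_interval :: "real \<Rightarrow> real \<Rightarrow> (real \<Rightarrow> complex) \<Rightarrow> bool" where
  "smooth_on_interval a b f \<longleftrightarrow>
     (\<exists>g :: nat \<Rightarrow> real \<Rightarrow> complex. g 0 = f \<and>
        (\<forall>k. \<forall>x\<in>{a..b}. (g k has_vector_derivative g (Suc k) x) (at x within {a..b})))"

text \<open>Dop lam S n f = (d/dt - lam 0) ((d/dt - lam 1) ( ... (d/dt - lam (n-1)) f)),
  derivatives taken within the set S.\<close>
fun Dop :: "(nat \<Rightarrow> real) \<Rightarrow> real set \<Rightarrow> nat \<Rightarrow> (real \<Rightarrow> complex) \<Rightarrow> real \<Rightarrow> complex" where
  "Dop lam S 0 f = f"
| "Dop lam S (Suc n) f =
     (\<lambda>x. vector_derivative (Dop (\<lambda>k. lam (Suc k)) S n f) (at x within S)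
          - complex_of_real (lam 0) * Dop (\<lambda>k. lam (Suc k)) S n f x)"

end

theory Submission
  imports Defs
begin

(* Write D = d/dt and L_c h = D h - c h, so that D^(n) f = L_(lam 0) ... L_(lam (n-1)) f.
   Put u = D^(2m) f, v = D^(2m+1) f, w = D^(2m+2) f, a = lam (2m), b = lam (2m+1).  Because the
   operators L_c have constant coefficients they commute, hence v = L_a u and w = L_b v, i.e.
   u' = v + a u and v' = w + b v.  On the window [x, x+d] (d = delta) one then extracts v(x)
   from the integrating-factor primitive P = rho u (with rho' = -a rho), whose derivative is
   rho v: since e^(-b(t-x)) v(t) stays within W (t-x) (1 + e^(-b(t-x))) of v(x), the function
   P - v(x) K, with K the primitive of k = rho e^(b(t-x)), varies slowly, and comparing its
   values at both endpoints bounds |v(x)| K(x+d) by 2 sup|u| plus a multiple of sup|w|. *)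

definition derivative_tower :: "real set \<Rightarrow> (nat \<Rightarrow> real \<Rightarrow> complex) \<Rightarrow> bool" where
  "derivative_tower S g \<longleftrightarrow> (\<forall>k. \<forall>x\<in>S. (g k has_vector_derivative g (Suc k) x) (at x within S))"

(* h is C-infinity on S: it agrees on S with the base of a derivative tower.  Only the values
   on S matter, which is what makes the operators below well behaved. *)
definition smooth_within :: "real set \<Rightarrow> (real \<Rightarrow> complex) \<Rightarrow> bool" where
  "smooth_within S h \<longleftrightarrow> (\<exists>g. derivative_tower S g \<and> (\<forall>x\<in>S. g 0 x = h x))"

definition shifted_deriv :: "real set \<Rightarrow> real \<Rightarrow> (real \<Rightarrow> complex) \<Rightarrow> real \<Rightarrow> complex" where
  "shifted_deriv S c h = (\<lambda>x. vector_derivative h (at x within S) - of_real c * h x)"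

lemma Dop_Suc_shifted:
  "Dop lam S (Suc n) f = shifted_deriv S (lam 0) (Dop (\<lambda>k. lam (Suc k)) S n f)"
  by (simp add: shifted_deriv_def)

lemma shifted_deriv_cong:
  assumes "\<And>y. y \<in> S \<Longrightarrow> F y = G y" "x \<in> S"
  shows "shifted_deriv S c F x = shifted_deriv S c G x"
proof -
  have "vector_derivative F (at x within S) = vector_derivative G (at x within S)"
    using assms by (intro vector_derivative_cong_eq always_eventually) auto
  then show ?thesis using assms by (simp add: shifted_deriv_def)
qed

lemma derivative_tower_shifted:
  assumes "derivative_tower S g"
  shows "derivative_tower S (\<lambda>k x. g (Suc k) x - of_real c * g k x)"
  using assms unfolding derivative_tower_def
  by (auto intro!: has_vector_derivative_diff has_vector_derivative_mult_right)

lemma derivative_tower_vector_derivative: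
  assumes "a < b" "derivative_tower {a..b} g" "\<And>y. y \<in> {a..b} \<Longrightarrow> g 0 y = h y" "x \<in> {a..b}"
  shows "(h has_vector_derivative g 1 x) (at x within {a..b})"
    and "vector_derivative h (at x within {a..b}) = g 1 x"
proof -
  have tower: "(g 0 has_vector_derivative g 1 x) (at x within {a..b})"
    using assms(2,4) unfolding derivative_tower_def by simp
  show *: "(h has_vector_derivative g 1 x) (at x within {a..b})"
    using has_vector_derivative_transform[OF assms(4) _ tower, of h] assms(3) by simp
  show "vector_derivative h (at x within {a..b}) = g 1 x"
    using vector_derivative_within_closed_interval[OF assms(1,4) *] .
qed

lemma shifted_deriv_tower:
  assumes "a < b" "derivative_tower {a..b} g" "\<And>y. y \<in> {a..b} \<Longrightarrow> g 0 y = h y" "x \<in> {a..b}"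
  shows "shifted_deriv {a..b} c h x = g 1 x - of_real c * g 0 x"
  using derivative_tower_vector_derivative(2)[OF assms] assms(3,4) by (simp add: shifted_deriv_def)

lemma smooth_within_shifted_deriv:
  assumes "a < b" "smooth_within {a..b} h"
  shows "smooth_within {a..b} (shifted_deriv {a..b} c h)"
proof -
  obtain g where g: "derivative_tower {a..b} g" "\<And>y. y \<in> {a..b} \<Longrightarrow> g 0 y = h y"
    using assms(2) unfolding smooth_within_def by blast
  show ?thesis
    unfolding smooth_within_def
    using derivative_tower_shifted[OF g(1), of c] shifted_deriv_tower[OF assms(1) g, of _ c]
    by (intro exI[of _ "\<lambda>k x. g (Suc k) x - of_real c * g k x"]) simp
qed

(* Constant coefficient operators commute: L_c L_e h = L_e L_c h for smooth h; both sides
   equal h'' - (c + e) h' + c e h. *)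
lemma shifted_deriv_commute:
  assumes "a < b" "smooth_within {a..b} h" "x \<in> {a..b}"
  shows "shifted_deriv {a..b} c (shifted_deriv {a..b} e h) x
       = shifted_deriv {a..b} e (shifted_deriv {a..b} c h) x"
proof -
  obtain g where g: "derivative_tower {a..b} g" "\<And>y. y \<in> {a..b} \<Longrightarrow> g 0 y = h y"
    using assms(2) unfolding smooth_within_def by blast
  have twice: "shifted_deriv {a..b} p (shifted_deriv {a..b} q h) x
      = g 2 x - of_real q * g 1 x - of_real p * (g 1 x - of_real q * g 0 x)" for p q
  proof -
    define gq where "gq = (\<lambda>k x. g (Suc k) x - of_real q * g k x)"
    have "derivative_tower {a..b} gq"
      unfolding gq_def by (rule derivative_tower_shifted[OF g(1)])
    moreover have "\<And>y. y \<in> {a..b} \<Longrightarrow> gq 0 y = shifted_deriv {a..b} q h y"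
      using shifted_deriv_tower[OF assms(1) g] by (simp add: gq_def)
    ultimately show ?thesis
      using shifted_deriv_tower[OF assms(1) _ _ assms(3), of gq] shifted_deriv_tower[OF assms(1) g assms(3)]
      by (simp add: gq_def numeral_2_eq_2)
  qed
  show ?thesis unfolding twice[of c e] twice[of e c] by (simp add: algebra_simps)
qed

lemma smooth_within_has_vector_derivative:
  assumes "a < b" "smooth_within {a..b} h" "x \<in> {a..b}"
  shows "(h has_vector_derivative vector_derivative h (at x within {a..b})) (at x within {a..b})"
proof -
  obtain g where g: "derivative_tower {a..b} g" "\<And>y. y \<in> {a..b} \<Longrightarrow> g 0 y = h y"
    using assms(2) unfolding smooth_within_def by blast
  show ?thesis
    using derivative_tower_vector_derivative[OF assms(1) g assms(3)] by simp
qed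

lemma smooth_within_continuous_on:
  assumes "a < b" "smooth_within {a..b} h"
  shows "continuous_on {a..b} h"
  using smooth_within_has_vector_derivative[OF assms] by (rule continuous_on_vector_derivative)

lemma smooth_within_Dop:
  assumes "a < b" "smooth_within {a..b} f"
  shows "smooth_within {a..b} (Dop lam {a..b} n f)"
proof (induction n arbitrary: lam)
  case 0
  show ?case using assms(2) by simp
next
  case (Suc n)
  show ?case
    unfolding Dop_Suc_shifted by (rule smooth_within_shifted_deriv[OF assms(1) Suc.IH])
qed

(* Peeling off the innermost factor instead: D^(n+1) f = L_(lam n) D^(n) f.  This follows by
   induction, commuting the outermost factor L_(lam 0) past the newly exposed one. *)
lemma Dop_Suc_last:
  assumes "a < b" "smooth_within {a..b} f" "x \<in> {a..b}"
  shows "Dop lam {a..b} (Suc n) f x = shifted_deriv {a..b} (lam n) (Dop lam {a..b} n f) x"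
  using assms(3)
proof (induction n arbitrary: lam x)
  case 0
  show ?case by (simp add: shifted_deriv_def)
next
  case (Suc n)
  let ?S = "{a..b}" and ?l = "\<lambda>k. lam (Suc k)"
  have "Dop lam ?S (Suc (Suc n)) f x = shifted_deriv ?S (lam 0) (Dop ?l ?S (Suc n) f) x"
    by (simp only: Dop_Suc_shifted)
  also have "\<dots> = shifted_deriv ?S (lam 0) (shifted_deriv ?S (lam (Suc n)) (Dop ?l ?S n f)) x"
    using Suc.IH[of _ ?l] by (intro shifted_deriv_cong Suc.prems) simp
  also have "\<dots> = shifted_deriv ?S (lam (Suc n)) (shifted_deriv ?S (lam 0) (Dop ?l ?S n f)) x"
    by (rule shifted_deriv_commute[OF assms(1) smooth_within_Dop[OF assms(1,2)] Suc.prems])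
  also have "\<dots> = shifted_deriv ?S (lam (Suc n)) (Dop lam ?S (Suc n) f) x"
    by (simp only: Dop_Suc_shifted)
  finally show ?case .
qed

lemma Dop_has_vector_derivative:
  assumes "a < b" "smooth_within {a..b} f" "x \<in> {a..b}"
  shows "(Dop lam {a..b} n f has_vector_derivative
           Dop lam {a..b} (Suc n) f x + of_real (lam n) * Dop lam {a..b} n f x) (at x within {a..b})"
  using smooth_within_has_vector_derivative[OF assms(1) smooth_within_Dop[OF assms(1,2)] assms(3)]
    Dop_Suc_last[OF assms] by (simp add: shifted_deriv_def)

lemma norm_le_SUP_compact:
  fixes h :: "'a::topological_space \<Rightarrow> 'b::real_normed_vector"
  assumes "continuous_on K h" "compact K" "s \<in> K"
  shows "norm (h s) \<le> (SUP t\<in>K. norm (h t))"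
proof -
  have "compact ((\<lambda>t. norm (h t)) ` K)"
    using assms(1,2) by (intro compact_continuous_image continuous_intros)
  then have "bdd_above ((\<lambda>t. norm (h t)) ` K)"
    by (intro bounded_imp_bdd_above compact_imp_bounded)
  then show ?thesis using assms(3) by (intro cSUP_upper)
qed

lemma mean_value_inequality_within:
  fixes F :: "real \<Rightarrow> 'a::real_normed_vector" and \<phi> :: "real \<Rightarrow> real"
  assumes "p \<le> q"
    and F': "\<And>t. t \<in> {p..q} \<Longrightarrow> (F has_vector_derivative F' t) (at t within {p..q})"
    and \<phi>': "\<And>t. t \<in> {p..q} \<Longrightarrow> (\<phi> has_real_derivative \<phi>' t) (at t within {p..q})"
    and bound: "\<And>t. t \<in> {p..q} \<Longrightarrow> norm (F' t) \<le> \<phi>' t"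
  shows "norm (F q - F p) \<le> \<phi> q - \<phi> p"
proof (cases "p = q")
  case True
  then show ?thesis by simp
next
  case False
  with assms(1) have "p < q" by simp
  have interior: "at t within {p..q} = at t" if "p < t" "t < q" for t
    using that by (intro at_within_Icc_at) auto
  show ?thesis
  proof (rule differentiable_bound_general[OF \<open>p < q\<close>])
    show "continuous_on {p..q} F" using F' by (rule continuous_on_vector_derivative)
    show "continuous_on {p..q} \<phi>" using \<phi>' by (rule DERIV_continuous_on)
    fix t assume t: "p < t" "t < q"
    then show "(F has_vector_derivative F' t) (at t)"
      using F'[of t] interior[OF t] by simp
    show "(\<phi> has_vector_derivative \<phi>' t) (at t)"
      using \<phi>'[of t] interior[OF t] t by (simp add: has_real_derivative_iff_has_vector_derivative)
    show "norm (F' t) \<le> \<phi>' t" using bound t by simp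
  qed
qed

lemma exp_between_le:
  fixes b s t :: real
  assumes "0 \<le> s" "s \<le> t"
  shows "exp (b * s) \<le> 1 + exp (b * t)"
proof (cases "b \<le> 0")
  case True
  then have "exp (b * s) \<le> 1" using assms by (simp add: mult_nonpos_nonneg)
  then show ?thesis by (smt (verit) exp_gt_zero)
next
  case False
  then have "exp (b * s) \<le> exp (b * t)" using assms by (simp add: mult_left_mono)
  then show ?thesis by (smt (verit) exp_gt_zero)
qed

(* If v' = w + b v and |w| <= W, then e^(-b(t-x)) v(t) stays close to v(x): its derivative is
   e^(-b(s-x)) w(s), and the weight never exceeds 1 + e^(-b(t-x)). *)
lemma exp_weighted_growth:
  fixes v w :: "real \<Rightarrow> complex"
  assumes "x \<le> t" "t \<le> y"
    and dv: "\<And>s. s \<in> {x..y} \<Longrightarrow> (v has_vector_derivative w s + of_real b * v s) (at s within {x..y})"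
    and wW: "\<And>s. s \<in> {x..y} \<Longrightarrow> cmod (w s) \<le> W"
  shows "cmod (of_real (exp (-b * (t - x))) * v t - v x) \<le> W * (1 + exp (-b * (t - x))) * (t - x)"
proof -
  define Q where "Q s = of_real (exp (-b * (s - x))) * v s" for s
  define C where "C = W * (1 + exp (-b * (t - x)))"
  have "norm (Q t - Q x) \<le> C * t - C * x"
  proof (rule mean_value_inequality_within[OF assms(1)])
    fix s assume s: "s \<in> {x..t}"
    then have "(v has_vector_derivative w s + of_real b * v s) (at s within {x..t})"
      using dv[of s] assms(2) by (auto intro: has_vector_derivative_within_subset)
    then show "(Q has_vector_derivative of_real (exp (-b * (s - x))) * w s) (at s within {x..t})"
      unfolding Q_def
      by (auto intro!: derivative_eq_intros elim!: has_vector_derivative_eq_rhs simp: algebra_simps)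
    show "((\<lambda>s. C * s) has_real_derivative C) (at s within {x..t})"
      by (auto intro!: derivative_eq_intros)
    have "exp (-b * (s - x)) \<le> 1 + exp (-b * (t - x))"
      using s by (intro exp_between_le) auto
    moreover have "cmod (w s) \<le> W" using s assms(2) wW by simp
    ultimately show "norm (of_real (exp (-b * (s - x))) * w s) \<le> C"
      unfolding C_def norm_mult by (simp add: mult_mono' mult.commute)
  qed
  then show ?thesis by (simp add: Q_def C_def algebra_simps)
qed

(* Extracting a constant from a derivative: if P' is close to K' z (up to B (K' + 1)) and P is
   bounded by U, then comparing P - z K at both endpoints bounds |z| K(y). *)
lemma extraction_bound:
  fixes P q :: "real \<Rightarrow> complex" and K k :: "real \<Rightarrow> real"
  assumes "x \<le> y"
    and dP: "\<And>t. t \<in> {x..y} \<Longrightarrow> (P has_vector_derivative q t) (at t within {x..y})"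
    and dK: "\<And>t. t \<in> {x..y} \<Longrightarrow> (K has_real_derivative k t) (at t within {x..y})"
    and "K x = 0"
    and PU: "\<And>t. t \<in> {x..y} \<Longrightarrow> cmod (P t) \<le> U"
    and close: "\<And>t. t \<in> {x..y} \<Longrightarrow> cmod (q t - of_real (k t) * z) \<le> B * (k t + 1)"
  shows "cmod z * K y \<le> 2 * U + B * (K y + (y - x))"
proof -
  define G where "G t = P t - z * of_real (K t)" for t
  have G_bound: "norm (G y - G x) \<le> B * (K y + y) - B * (K x + x)"
  proof (rule mean_value_inequality_within[OF assms(1)])
    fix t assume t: "t \<in> {x..y}"
    show "(G has_vector_derivative q t - of_real (k t) * z) (at t within {x..y})"
      unfolding G_def using dP[OF t] dK[OF t]
      by (auto intro!: derivative_eq_intros simp: mult.commute)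
    show "((\<lambda>t. B * (K t + t)) has_real_derivative B * (k t + 1)) (at t within {x..y})"
      using dK[OF t] by (auto intro!: derivative_eq_intros)
    show "norm (q t - of_real (k t) * z) \<le> B * (k t + 1)" using close[OF t] .
  qed
  have xy: "x \<in> {x..y}" "y \<in> {x..y}" using assms(1) by auto
  have "cmod z * K y \<le> cmod (z * of_real (K y))"
    by (simp add: norm_mult mult_left_mono)
  also have "z * of_real (K y) = P y - P x - (G y - G x)"
    by (simp add: G_def assms(4))
  also have "cmod \<dots> \<le> cmod (P y) + cmod (P x) + cmod (G y - G x)"
    by (rule order_trans[OF norm_triangle_ineq4]) (simp add: norm_triangle_ineq4)
  also have "\<dots> \<le> 2 * U + B * (K y + (y - x))"
    using PU[OF xy(1)] PU[OF xy(2)] G_bound assms(4) by (simp add: algebra_simps)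
  finally show ?thesis .
qed

lemma exp_weight_bounds:
  fixes a b d s :: real
  assumes "0 \<le> s" "s \<le> d"
  shows "min 0 (a * d) - a * s \<le> 0"
    and "- ((\<bar>a\<bar> + \<bar>b\<bar>) * d) \<le> min 0 (a * d) + (b - a) * s"
proof -
  have d: "0 \<le> d" using assms by simp
  have as: "\<bar>a * s\<bar> \<le> \<bar>a\<bar> * d" and bs: "\<bar>b * s\<bar> \<le> \<bar>b\<bar> * d"
    and ads: "\<bar>a * (d - s)\<bar> \<le> \<bar>a\<bar> * d"
    using assms unfolding abs_mult by (simp_all add: mult_left_mono)
  have split: "min 0 (a * d) + (b - a) * s = min 0 (a * d) - a * s + b * s"
    by (simp add: left_diff_distrib)
  have "min 0 (a * d) - a * s \<le> 0 \<and> - (\<bar>a\<bar> * d) \<le> min 0 (a * d) - a * s"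
  proof (cases "0 \<le> a")
    case True
    then have "min 0 (a * d) = 0" and "0 \<le> a * s" using d assms by auto
    then show ?thesis using abs_le_D1[OF as] by linarith
  next
    case False
    then have "a * d \<le> 0" and "a * (d - s) \<le> 0"
      using d assms by (auto simp: mult_nonpos_nonneg)
    then have "min 0 (a * d) - a * s = a * (d - s)" and "a * (d - s) \<le> 0"
      by (auto simp: min_def right_diff_distrib)
    then show ?thesis using abs_le_D2[OF ads] by linarith
  qed
  then show "min 0 (a * d) - a * s \<le> 0"
    and "- ((\<bar>a\<bar> + \<bar>b\<bar>) * d) \<le> min 0 (a * d) + (b - a) * s"
    using abs_le_D2[OF bs] unfolding split by (auto simp: distrib_right)
qed

(* The closeness hypothesis of extraction_bound for P' = r v(t) and K' = r e^(b(t-x)), with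
   a weight 0 < r <= 1, derived from the growth estimate for e^(-b(t-x)) v(t). *)
lemma weighted_difference_bound:
  fixes v :: "real \<Rightarrow> complex" and r b d t x W :: real
  assumes "0 < r" "r \<le> 1" "x \<le> t" "t \<le> x + d" "0 \<le> W"
    and growth: "cmod (of_real (exp (- b * (t - x))) * v t - v x) \<le> W * (1 + exp (- b * (t - x))) * (t - x)"
  shows "cmod (of_real r * v t - of_real (r * exp (b * (t - x))) * v x) \<le> W * d * (r * exp (b * (t - x)) + 1)"
proof -
  define k where "k = r * exp (b * (t - x))"
  have k_pos: "0 < k" using assms(1) by (simp add: k_def)
  have r_eq: "r = k * exp (- b * (t - x))"
    by (simp add: k_def mult.assoc flip: exp_add)
  have "cmod (of_real r * v t - of_real k * v x)
      = cmod (of_real k * (of_real (exp (- b * (t - x))) * v t - v x))"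
    unfolding r_eq by (simp add: algebra_simps)
  also have "\<dots> = k * cmod (of_real (exp (- b * (t - x))) * v t - v x)"
    using k_pos by (simp add: norm_mult)
  also have "\<dots> \<le> k * (W * (1 + exp (- b * (t - x))) * (t - x))"
    using growth k_pos by (intro mult_left_mono) auto
  also have "\<dots> = W * (t - x) * (k + r)"
    unfolding r_eq by (simp add: algebra_simps)
  also have "\<dots> \<le> W * d * (k + 1)"
    using assms k_pos by (intro mult_mono add_left_mono) auto
  finally show ?thesis unfolding k_def .
qed

(* Solving the extracted inequality for z, using the lower bound on K(x+d). *)
lemma extracted_value_bound:
  fixes z d U W E K :: real
  assumes "0 < d" "0 \<le> U" "0 \<le> W" "0 \<le> E" "d * exp (- E) \<le> K"
    and extracted: "z * K \<le> 2 * U + W * d * (K + d)"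
  shows "z \<le> exp E * (2 * U / d + 2 * d * W)"
proof -
  have K_pos: "0 < K" and d_le: "d \<le> exp E * K"
    using assms(1,5) by (auto simp: exp_minus field_simps intro: less_le_trans[of 0 "d * exp (- E)"])
  have "2 * U * d \<le> 2 * U * (exp E * K)"
    using d_le assms(2) by (simp add: mult_left_mono)
  then have U_part: "2 * U \<le> exp E * (2 * U / d) * K"
    using assms(1) by (simp add: field_simps)
  have "1 * (d * W) \<le> exp E * (d * W)"
    using assms(1,3,4) by (intro mult_right_mono) auto
  then have W_part1: "W * d * K \<le> exp E * (d * W) * K"
    using K_pos by (simp add: mult_right_mono mult.commute)
  have "(W * d) * d \<le> (W * d) * (exp E * K)"
    using d_le assms(1,3) by (intro mult_left_mono) auto
  then have W_part2: "W * d * d \<le> exp E * (d * W) * K"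
    by (simp add: algebra_simps)
  have "z * K \<le> exp E * (2 * U / d + 2 * d * W) * K"
    using extracted U_part W_part1 W_part2 by (simp add: algebra_simps)
  then show ?thesis using K_pos by simp
qed

lemma two_step_estimate:
  fixes u v w :: "real \<Rightarrow> complex" and a b d x U W :: real
  assumes "0 < d"
    and du: "\<And>s. s \<in> {x..x+d} \<Longrightarrow> (u has_vector_derivative v s + of_real a * u s) (at s within {x..x+d})"
    and dv: "\<And>s. s \<in> {x..x+d} \<Longrightarrow> (v has_vector_derivative w s + of_real b * v s) (at s within {x..x+d})"
    and uU: "\<And>s. s \<in> {x..x+d} \<Longrightarrow> cmod (u s) \<le> U"
    and wW: "\<And>s. s \<in> {x..x+d} \<Longrightarrow> cmod (w s) \<le> W"
  shows "cmod (v x) \<le> exp ((\<bar>a\<bar> + \<bar>b\<bar>) * d) * (2 * U / d + 2 * d * W)"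
proof -
  define c where "c = min 0 (a * d)"
  define \<rho> where "\<rho> t = exp (c - a * (t - x))" for t
  define k where "k t = \<rho> t * exp (b * (t - x))" for t
  define K where "K t = integral {x..t} k" for t
  have "x \<le> x + d" using assms(1) by simp
  have U0: "0 \<le> U" and W0: "0 \<le> W"
    using uU[of x] wW[of x] \<open>x \<le> x + d\<close> by (auto intro: order_trans[OF norm_ge_zero])
  have \<rho>_le: "\<rho> t \<le> 1" and k_ge: "exp (- ((\<bar>a\<bar> + \<bar>b\<bar>) * d)) \<le> k t" if "t \<in> {x..x+d}" for t
    using exp_weight_bounds(1)[of "t - x" d a] exp_weight_bounds(2)[of "t - x" d a b] that
    unfolding \<rho>_def k_def c_def by (auto simp: algebra_simps simp flip: exp_add)
  have \<rho>_pos: "0 < \<rho> t" for t unfolding \<rho>_def by simp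
  have k_cont: "continuous_on {x..x+d} k" unfolding k_def \<rho>_def by (intro continuous_intros)
  have dK: "(K has_real_derivative k t) (at t within {x..x+d})" if "t \<in> {x..x+d}" for t
    unfolding K_def by (rule integral_has_real_derivative[OF k_cont that])
  have K_end: "d * exp (- ((\<bar>a\<bar> + \<bar>b\<bar>) * d)) \<le> K (x + d)"
  proof -
    have "integral {x..x+d} (\<lambda>_. exp (- ((\<bar>a\<bar> + \<bar>b\<bar>) * d))) \<le> integral {x..x+d} k"
      using k_ge k_cont by (intro integral_le integrable_continuous_interval) auto
    then show ?thesis using assms(1) by (simp add: K_def)
  qed
  have "cmod (v x) * K (x + d) \<le> 2 * U + W * d * (K (x + d) + (x + d - x))"
  proof (rule extraction_bound[of x "x + d" "\<lambda>t. of_real (\<rho> t) * u t" "\<lambda>t. of_real (\<rho> t) * v t"])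
    fix t assume t: "t \<in> {x..x+d}"
    have "((\<lambda>t. of_real (\<rho> t)) has_vector_derivative of_real (\<rho> t * (- a))) (at t within {x..x+d})"
      unfolding \<rho>_def by (auto intro!: derivative_eq_intros)
    from has_vector_derivative_mult[OF this du[OF t]]
    show "((\<lambda>t. of_real (\<rho> t) * u t) has_vector_derivative of_real (\<rho> t) * v t) (at t within {x..x+d})"
      by (rule has_vector_derivative_eq_rhs) (simp add: algebra_simps)
    show "(K has_real_derivative k t) (at t within {x..x+d})" using dK[OF t] .
    have "cmod (of_real (\<rho> t) * u t) \<le> 1 * U"
      unfolding norm_mult using \<rho>_le[OF t] uU[OF t] U0 \<rho>_pos[of t] by (intro mult_mono) auto
    then show "cmod (of_real (\<rho> t) * u t) \<le> U" by simp
    show "cmod (of_real (\<rho> t) * v t - of_real (k t) * v x) \<le> W * d * (k t + 1)"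
      unfolding k_def using t W0 \<rho>_pos[of t] \<rho>_le[OF t] exp_weighted_growth[of x t "x + d" v w b W] dv wW
      by (intro weighted_difference_bound) auto
  qed (use \<open>x \<le> x + d\<close> in \<open>simp_all add: K_def\<close>)
  then show ?thesis
    using extracted_value_bound[OF assms(1) U0 W0 _ K_end] assms(1) by simp
qed

lemma Dop_le_SUP:
  assumes "a < b" "smooth_within {a..b} f" "R \<subseteq> {a..b}" "compact R" "s \<in> R"
  shows "cmod (Dop lam {a..b} n f s) \<le> (SUP t\<in>R. cmod (Dop lam {a..b} n f t))"
proof -
  have "continuous_on R (Dop lam {a..b} n f)"
    using smooth_within_continuous_on[OF assms(1) smooth_within_Dop[OF assms(1,2)]] assms(3)
    by (rule continuous_on_subset)
  then show ?thesis using assms(4,5) by (rule norm_le_SUP_compact)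
qed

lemma Dop_window_estimate:
  assumes "a < b" "smooth_within {a..b} f" "0 < d" "{x..x+d} \<subseteq> R" "R \<subseteq> {a..b}" "compact R"
  shows "cmod (Dop lam {a..b} (Suc n) f x)
    \<le> exp ((\<bar>lam n\<bar> + \<bar>lam (Suc n)\<bar>) * d) *
       (2 * (SUP t\<in>R. cmod (Dop lam {a..b} n f t)) / d
        + 2 * d * (SUP t\<in>R. cmod (Dop lam {a..b} (Suc (Suc n)) f t)))"
proof -
  have deriv: "(Dop lam {a..b} k f has_vector_derivative
      Dop lam {a..b} (Suc k) f s + of_real (lam k) * Dop lam {a..b} k f s) (at s within {x..x+d})"
    if "s \<in> {x..x+d}" for k s
    using Dop_has_vector_derivative[OF assms(1,2)] that assms(4,5)
    by (blast intro: has_vector_derivative_within_subset)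
  have bound: "cmod (Dop lam {a..b} k f s) \<le> (SUP t\<in>R. cmod (Dop lam {a..b} k f t))"
    if "s \<in> {x..x+d}" for k s
    using that assms(4) by (intro Dop_le_SUP[OF assms(1,2,5,6)]) auto
  show ?thesis by (rule two_step_estimate[OF assms(3) deriv deriv bound bound])
qed

lemma estimate_le_stated_constant:
  fixes d e U W :: real
  assumes "0 < d" "0 \<le> e" "0 \<le> U" "0 \<le> W"
  shows "e * (2 * U / d + 2 * d * W) \<le> 2 * max (2 / d) d * e * (U + W)"
proof -
  have "2 * U / d = (2 / d) * U" by simp
  also have "\<dots> \<le> 2 * max (2 / d) d * U"
    using assms(1,3) by (intro mult_right_mono) (auto simp: max_def)
  finally have U_part: "2 * U / d \<le> 2 * max (2 / d) d * U" .
  have W_part: "2 * d * W \<le> 2 * max (2 / d) d * W"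
    using assms(4) by (intro mult_right_mono) auto
  have "e * (2 * U / d + 2 * d * W) \<le> e * (2 * max (2 / d) d * U + 2 * max (2 / d) d * W)"
    using U_part W_part assms(2) by (intro mult_left_mono) auto
  then show ?thesis by (simp add: algebra_simps)
qed

theorem mainTheorem20:
  fixes lam :: "nat \<Rightarrow> real" and \<gamma> \<delta> x0 :: real and f :: "real \<Rightarrow> complex"
  assumes "\<gamma> > 0"
    and "smooth_on_interval x0 (x0 + \<gamma>) f"
    and "0 < 2 * \<delta>" and "2 * \<delta> < \<gamma>"
  shows "\<forall>m::nat. \<forall>x\<in>{x0..x0+\<delta>}.
    cmod (Dop lam {x0..x0+\<gamma>} (2*m+1) f x)
      \<le> 2 * max (2 / \<delta>) \<delta> * exp ((\<bar>lam (2*m)\<bar> + \<bar>lam (2*m+1)\<bar>) * \<delta>) *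
         ((SUP t\<in>{x0..x0+2*\<delta>}. cmod (Dop lam {x0..x0+\<gamma>} (2*m) f t))
          + (SUP t\<in>{x0..x0+2*\<delta>}. cmod (Dop lam {x0..x0+\<gamma>} (2*m+2) f t)))"
proof (intro allI ballI)
  fix m :: nat and x assume x: "x \<in> {x0..x0+\<delta>}"
  let ?D = "\<lambda>n. Dop lam {x0..x0+\<gamma>} n f"
  let ?Sup = "\<lambda>n. SUP t\<in>{x0..x0+2*\<delta>}. cmod (?D n t)"
  have interval: "x0 < x0 + \<gamma>" and "0 < \<delta>" using assms by auto
  have smooth: "smooth_within {x0..x0+\<gamma>} f"
    using assms(2) unfolding smooth_on_interval_def smooth_within_def derivative_tower_def by auto
  have window: "{x..x+\<delta>} \<subseteq> {x0..x0+2*\<delta>}" "{x0..x0+2*\<delta>} \<subseteq> {x0..x0+\<gamma>}"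
    using x assms by auto
  have Sup_nonneg: "0 \<le> ?Sup n" for n
    using Dop_le_SUP[OF interval smooth window(2) compact_Icc, of x0] \<open>0 < \<delta>\<close>
    by (auto intro: order_trans[OF norm_ge_zero])
  have "cmod (?D (2*m+1) x) \<le> exp ((\<bar>lam (2*m)\<bar> + \<bar>lam (2*m+1)\<bar>) * \<delta>)
      * (2 * ?Sup (2*m) / \<delta> + 2 * \<delta> * ?Sup (2*m+2))"
    using Dop_window_estimate[OF interval smooth \<open>0 < \<delta>\<close> window compact_Icc, of lam "2*m"] by simp
  also have "\<dots> \<le> 2 * max (2 / \<delta>) \<delta> * exp ((\<bar>lam (2*m)\<bar> + \<bar>lam (2*m+1)\<bar>) * \<delta>)
      * (?Sup (2*m) + ?Sup (2*m+2))"
    by (rule estimate_le_stated_constant[OF \<open>0 < \<delta>\<close> _ Sup_nonneg Sup_nonneg]) simp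
  finally show "cmod (?D (2*m+1) x) \<le> 2 * max (2 / \<delta>) \<delta> * exp ((\<bar>lam (2*m)\<bar> + \<bar>lam (2*m+1)\<bar>) * \<delta>)
      * (?Sup (2*m) + ?Sup (2*m+2))" .
qed

end
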